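(* Let $M\ge K\ge 2$ be integers and $P_u>0$. Define $$R_{\mathrm{ZF,UL}}=K\log_2\!\left(1+P_u(M-K+1)\right),\qquad R_{\mathrm{MRC,UL}}=K\log_2\!\left(1+\frac{P_uM}{P_u(K-1)+1}\right).$$ Then $R_{\mathrm{ZF,UL}}\ge R_{\mathrm{MRC,UL}}$ if and only if $P_u\ge P_{\mathrm{th,UL}}:=\dfrac{1}{M-K+1}$.
   Context: In the paper, $R_{\mathrm{ZF,UL}}$ and $R_{\mathrm{MRC,UL}}$ are the closed-form low-SNR expressions for the ergodic uplink sum rate of a system with $M$ base-station antennas and $K$ single-antenna users each transmitting with power $P_u$ (i.i.d. Rayleigh channel, unit noise variance), using a zero-forcing receive filter and maximum ratio combining, respectively; the lemma states that ZF gives the better sum rate exactly when the per-user power exceeds $P_{\mathrm{th,UL}}$. *)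

theory Defs
  imports Complex_Main
begin

definition R_ZF_UL :: "nat \<Rightarrow> nat \<Rightarrow> real \<Rightarrow> real" where
  "R_ZF_UL M K Pu = real K * log 2 (1 + Pu * (real M - real K + 1))"

definition R_MRC_UL :: "nat \<Rightarrow> nat \<Rightarrow> real \<Rightarrow> real" where
  "R_MRC_UL M K Pu = real K * log 2 (1 + Pu * real M / (Pu * (real K - 1) + 1))"

definition P_th_UL :: "nat \<Rightarrow> nat \<Rightarrow> real" where
  "P_th_UL M K = 1 / (real M - real K + 1)"

end

theory Submission
  imports Defs
begin

text \<open>With \<open>a = M - K + 1\<close> and \<open>k = K - 1\<close>, both rates are \<open>K\<close> times the logarithm of
  \<open>1 +\<close> an SINR, and the SINR comparison reduces to
  \<open>p (a + k) \<le> p a (p k + 1)\<close>, i.e. \<open>p k (a p - 1) \<ge> 0\<close>; since \<open>p k > 0\<close>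
  this holds exactly when \<open>p \<ge> 1 / a\<close>.\<close>

lemma mrc_sinr_le_zf_sinr_iff:
  fixes p a k :: real
  assumes "0 < p" and "0 < k"
  shows "p * (a + k) / (p * k + 1) \<le> p * a \<longleftrightarrow> 1 \<le> a * p"
proof -
  have den: "0 < p * k + 1" using assms by (simp add: add_pos_pos)
  have "p * (a + k) / (p * k + 1) \<le> p * a \<longleftrightarrow> p * (a + k) \<le> p * a * (p * k + 1)"
    using den by (simp add: divide_le_eq)
  also have "\<dots> \<longleftrightarrow> 0 \<le> (p * k) * (a * p - 1)"
    by (simp add: algebra_simps)
  also have "\<dots> \<longleftrightarrow> 1 \<le> a * p"
    using mult_le_cancel_left_pos[OF mult_pos_pos[OF assms], of 0 "a * p - 1"] by simp
  finally show ?thesis .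
qed

theorem lemma7:
  fixes M K :: nat and Pu :: real
  assumes "2 \<le> K" and "K \<le> M" and "0 < Pu"
  shows "R_ZF_UL M K Pu \<ge> R_MRC_UL M K Pu \<longleftrightarrow> Pu \<ge> P_th_UL M K"
proof -
  define a where "a = real M - real K + 1"
  define k where "k = real K - 1"
  have a: "1 \<le> a" and k: "1 \<le> k" using assms(1,2) by (simp_all add: a_def k_def)
  have M: "real M = a + k" by (simp add: a_def k_def)
  have sinr_pos: "0 < 1 + Pu * real M / (Pu * k + 1)"
    using assms(3) k by (simp add: add_pos_nonneg)
  have "R_MRC_UL M K Pu \<le> R_ZF_UL M K Pu \<longleftrightarrow>
        1 + Pu * real M / (Pu * k + 1) \<le> 1 + Pu * a"
    unfolding R_ZF_UL_def R_MRC_UL_def a_def[symmetric] k_def[symmetric]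
    using assms(1,3) a sinr_pos by (simp add: add_pos_pos)
  also have "\<dots> \<longleftrightarrow> 1 \<le> a * Pu"
    unfolding M using mrc_sinr_le_zf_sinr_iff[OF assms(3)] k by simp
  also have "\<dots> \<longleftrightarrow> P_th_UL M K \<le> Pu"
    unfolding P_th_UL_def a_def[symmetric] using a by (simp add: divide_le_eq mult.commute)
  finally show ?thesis .
qed

end
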